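(* For every $i\ge1$, $$P_i=\sum_{a_1+2a_2+\cdots+ia_i=i}(-1)^{a_1+\cdots+a_i+1}\frac{(a_1+\cdots+a_i-1)!}{a_1!\cdots a_i!}\,l_1^{a_1}\cdots l_i^{a_i},$$ the sum being over tuples $(a_1,\dots,a_i)$ of nonnegative integers.
   Context: ${\cal H}_R$ is the commutative polynomial algebra over $\mathbb{Q}$ on isomorphism classes of rooted trees (finite connected simply connected graphs with a root, edges oriented away from the root). A ladder is a rooted tree in which every vertex has at most one outgoing edge; $l_i$ denotes the unique ladder with $i$ vertices. For $n\ge1$ let $\Psi_n(X_1,\dots,X_n)=\sum_{a_1+2a_2+\cdots+na_n=n}\frac{X_1^{a_1}\cdots X_n^{a_n}}{a_1!\cdots a_n!}$. Define $P_1=l_1$ and, for $n\ge2$, $P_n=l_n-\Psi_n(P_1,\dots,P_{n-1},0)$ (computed in ${\cal H}_R$). *)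

theory Defs
  imports Complex_Main "HOL-Library.Multiset" "HOL-Library.Poly_Mapping"
begin

text \<open>Isomorphism classes of rooted trees: a rooted tree is a root together with
  the multiset of (isomorphism classes of) subtrees hanging at its children.\<close>
datatype rtree = Node "rtree multiset"

text \<open>The Connes--Kreimer algebra H_R: the commutative polynomial algebra over Q
  on the set of rooted trees; monomials are finitely supported exponent maps.\<close>
type_synonym HR = "(rtree \<Rightarrow>\<^sub>0 nat) \<Rightarrow>\<^sub>0 rat"

definition tree_var :: "rtree \<Rightarrow> HR" where
  "tree_var t = Poly_Mapping.single (Poly_Mapping.single t 1) 1"

definition const :: "rat \<Rightarrow> HR" where
  "const c = Poly_Mapping.single 0 c"

fun ladder_tree :: "nat \<Rightarrow> rtree" where
  "ladder_tree 0 = Node {#}"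
| "ladder_tree (Suc 0) = Node {#}"
| "ladder_tree (Suc (Suc n)) = Node {# ladder_tree (Suc n) #}"

definition ladder :: "nat \<Rightarrow> HR" where
  "ladder i = tree_var (ladder_tree i)"

definition tuples :: "nat \<Rightarrow> (nat \<Rightarrow> nat) set" where
  "tuples n = {a. (\<forall>k. k \<notin> {1..n} \<longrightarrow> a k = 0) \<and> (\<Sum>k=1..n. k * a k) = n}"

definition Psi :: "nat \<Rightarrow> (nat \<Rightarrow> HR) \<Rightarrow> HR" where
  "Psi n X = (\<Sum>a\<in>tuples n.
      const (1 / of_nat (\<Prod>k=1..n. fact (a k))) * (\<Prod>k=1..n. X k ^ a k))"

text \<open>Pfun m k = P_k for 1 \<le> k \<le> m, and 0 otherwise.\<close>
fun Pfun :: "nat \<Rightarrow> nat \<Rightarrow> HR" where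
  "Pfun 0 = (\<lambda>_. 0)"
| "Pfun (Suc m) = (Pfun m)(Suc m :=
      (if m = 0 then ladder 1 else ladder (Suc m) - Psi (Suc m) (Pfun m)))"

definition P :: "nat \<Rightarrow> HR" where
  "P n = Pfun n n"

end

theory Submission
  imports Defs "HOL-Computational_Algebra.Formal_Power_Series"
begin

text \<open>Psi n X is the coefficient of t^n in exp (X 1 t + X 2 t^2 + ...), so the recursive
  definition of P says exp (P 1 t + P 2 t^2 + ...) = 1 + L with L = l 1 t + l 2 t^2 + ....
  Hence P 1 t + P 2 t^2 + ... = log (1 + L), the sum of (-1)^(m+1) L^m / m, and the
  claimed formula is its coefficient of t^i once L^m is expanded by the multinomial theorem.
  Instead of exp and log of power series we use their differential equations: E = exp Y is
  characterised by n E n = \<Sum>k k Y k E (n - k), and the logarithm Q truncated at degree N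
  satisfies Q' (1 + L) = L' up to degree N. So P and the claimed coefficients both solve
  n l n = \<Sum>k k Y k [t^(n - k)] (1 + L), which determines Y 1, Y 2, ... one after the other.\<close>

lemma const_mult: "const (a * b) = const a * const b"
  by (simp add: const_def mult_single)

lemma const_of_nat [simp]: "const (of_nat n) = of_nat n"
  by (simp add: const_def)

lemma const_one [simp]: "const 1 = 1"
  by (simp add: const_def)

lemma const_minus: "const (- a) = - const a"
  by (simp add: const_def single_uminus)

lemma const_power: "const (a ^ j) = const a ^ j"
  by (induction j) (simp_all add: const_mult)

lemma of_nat_mult_const: "of_nat n * const c = const (of_nat n * c)"
  by (simp add: const_mult)

lemma HR_of_nat_mult_left_cancel:
  fixes x y :: HR
  assumes "of_nat n * x = of_nat n * y" and "n \<noteq> 0"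
  shows "x = y"
proof -
  have inv: "const (1 / of_nat n) * of_nat n = (1::HR)"
    using assms(2) by (simp add: mult.commute[of _ "of_nat n"] of_nat_mult_const)
  from assms(1) have "const (1 / of_nat n) * (of_nat n * x) = const (1 / of_nat n) * (of_nat n * y)"
    by simp
  then show ?thesis
    by (simp add: mult.assoc[symmetric] inv)
qed

lemma sum_fun_upd_remove:
  "finite S \<Longrightarrow> k \<in> S \<Longrightarrow> (\<Sum>j\<in>S. f j ((a(k := v)) j)) = f k v + (\<Sum>j\<in>S - {k}. f j (a j))"
  by (simp add: sum.remove)

lemma prod_fun_upd_remove:
  "finite S \<Longrightarrow> k \<in> S \<Longrightarrow> (\<Prod>j\<in>S. f j ((a(k := v)) j)) = f k v * (\<Prod>j\<in>S - {k}. f j (a j))"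
  by (simp add: prod.remove)

lemma tuples_zero_outside: "a \<in> tuples n \<Longrightarrow> k \<notin> {1..n} \<Longrightarrow> a k = 0"
  by (simp add: tuples_def)

lemma tuples_part_le:
  assumes "a \<in> tuples n" and "k \<in> {1..n}"
  shows "k * a k \<le> n"
proof -
  have "k * a k \<le> (\<Sum>j=1..n. j * a j)"
    by (rule member_le_sum) (use assms(2) in auto)
  then show ?thesis
    using assms(1) by (simp add: tuples_def)
qed

lemma tuples_le:
  assumes "a \<in> tuples n"
  shows "a k \<le> n"
proof (cases "k \<in> {1..n}")
  case True
  then have "a k \<le> k * a k" by simp
  also have "\<dots> \<le> n" using tuples_part_le[OF assms True] .
  finally show ?thesis .
qed (use tuples_zero_outside[OF assms] in simp)

lemma finite_tuples: "finite (tuples n)"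
proof (rule finite_subset)
  show "tuples n \<subseteq> {a. \<forall>k. (k \<in> {1..n} \<longrightarrow> a k \<in> {0..n}) \<and> (k \<notin> {1..n} \<longrightarrow> a k = 0)}"
    using tuples_le tuples_zero_outside by auto
  show "finite {a. \<forall>k. (k \<in> {1..n} \<longrightarrow> a k \<in> {0..n}) \<and> (k \<notin> {1..n} \<longrightarrow> a k = 0)}"
    by (rule finite_set_of_finite_funs) auto
qed

lemma tuples_0: "tuples 0 = {\<lambda>_. 0}"
  by (auto simp: tuples_def)

lemma tuples_sum_extend:
  assumes "a \<in> tuples m" and "m \<le> N" and "\<And>j. a j = 0 \<Longrightarrow> g j = 0"
  shows "sum g {1..N} = sum g {1..m}"
  by (intro sum.mono_neutral_right ballI assms(3) tuples_zero_outside[OF assms(1)]) (use assms(2) in auto)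

lemma tuples_prod_extend:
  assumes "a \<in> tuples m" and "m \<le> N" and "\<And>j. a j = 0 \<Longrightarrow> g j = 1"
  shows "prod g {1..N} = prod g {1..m}"
  by (intro prod.mono_neutral_right ballI assms(3) tuples_zero_outside[OF assms(1)]) (use assms(2) in auto)

lemma tuples_weight_extend:
  assumes "a \<in> tuples m" and "m \<le> N"
  shows "(\<Sum>j=1..N. j * a j) = m"
proof -
  have "(\<Sum>j=1..N. j * a j) = (\<Sum>j=1..m. j * a j)"
    by (rule tuples_sum_extend[OF assms]) simp
  then show ?thesis
    using assms(1) by (simp add: tuples_def)
qed

lemma tuples_iff_weight:
  assumes "m \<le> N" and supp: "\<And>j. j \<notin> {1..N} \<Longrightarrow> a j = 0"
  shows "a \<in> tuples m \<longleftrightarrow> (\<Sum>j=1..N. j * a j) = m"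
proof
  assume "a \<in> tuples m"
  then show "(\<Sum>j=1..N. j * a j) = m"
    using assms(1) by (rule tuples_weight_extend)
next
  assume weight: "(\<Sum>j=1..N. j * a j) = m"
  have supp_m: "a j = 0" if "j \<notin> {1..m}" for j
  proof (rule ccontr)
    assume nz: "a j \<noteq> 0"
    then have j: "j \<in> {1..N}" using supp by meson
    have "j \<le> j * a j" using nz by simp
    also have "\<dots> \<le> m" using weight member_le_sum[of j "{1..N}" "\<lambda>j. j * a j"] j by simp
    finally show False using that j by simp
  qed
  have "(\<Sum>j=1..N. j * a j) = (\<Sum>j=1..m. j * a j)"
    by (intro sum.mono_neutral_right ballI) (use assms(1) supp_m in auto)
  then show "a \<in> tuples m"
    using weight supp_m by (simp add: tuples_def)
qed

lemma fun_upd_in_tuples: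
  assumes a: "a \<in> tuples m" and k: "k \<in> {1..N}" and "m \<le> N" and "m' \<le> N"
    and weight_change: "m + k * v = m' + k * a k"
  shows "a(k := v) \<in> tuples m'"
proof -
  have "(\<Sum>j=1..N. j * (a(k := v)) j) = k * v + (\<Sum>j\<in>{1..N} - {k}. j * a j)"
    by (rule sum_fun_upd_remove) (use k in auto)
  moreover have "m = (\<Sum>j=1..N. j * a j)"
    using tuples_weight_extend[OF a \<open>m \<le> N\<close>] by simp
  moreover have "\<dots> = k * a k + (\<Sum>j\<in>{1..N} - {k}. j * a j)"
    by (rule sum.remove) (use k in auto)
  ultimately have weight: "(\<Sum>j=1..N. j * (a(k := v)) j) = m'"
    using weight_change by linarith
  have supp: "(a(k := v)) j = 0" if "j \<notin> {1..N}" for j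
    using that k tuples_zero_outside[OF a] \<open>m \<le> N\<close> by auto
  show ?thesis
    using tuples_iff_weight[where a = "a(k := v)", OF \<open>m' \<le> N\<close> supp] weight by simp
qed

lemma bij_betw_tuples_increment:
  assumes k: "k \<in> {1..n}"
  shows "bij_betw (\<lambda>b. b(k := Suc (b k))) (tuples (n - k)) {a \<in> tuples n. a k \<noteq> 0}"
proof (rule bij_betw_byWitness[where f' = "\<lambda>a. a(k := a k - 1)"])
  show "(\<lambda>b. b(k := Suc (b k))) ` tuples (n - k) \<subseteq> {a \<in> tuples n. a k \<noteq> 0}"
  proof (rule image_subsetI)
    fix b assume "b \<in> tuples (n - k)"
    then have "b(k := Suc (b k)) \<in> tuples n"
      by (rule fun_upd_in_tuples) (use k in auto)
    then show "b(k := Suc (b k)) \<in> {a \<in> tuples n. a k \<noteq> 0}"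
      by simp
  qed
  show "(\<lambda>a. a(k := a k - 1)) ` {a \<in> tuples n. a k \<noteq> 0} \<subseteq> tuples (n - k)"
  proof (rule image_subsetI)
    fix a assume "a \<in> {a \<in> tuples n. a k \<noteq> 0}"
    then obtain c where a: "a \<in> tuples n" and c: "a k = Suc c"
      using not0_implies_Suc by auto
    show "a(k := a k - 1) \<in> tuples (n - k)"
      by (rule fun_upd_in_tuples[OF a k]) (use k c in auto)
  qed
qed auto

section \<open>The exponential recurrence\<close>

definition tuple_length :: "nat \<Rightarrow> (nat \<Rightarrow> nat) \<Rightarrow> nat" where
  "tuple_length n a = (\<Sum>k=1..n. a k)"

definition tuple_monomial :: "(nat \<Rightarrow> HR) \<Rightarrow> nat \<Rightarrow> (nat \<Rightarrow> nat) \<Rightarrow> HR" where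
  "tuple_monomial X n a = const (1 / of_nat (\<Prod>k=1..n. fact (a k))) * (\<Prod>k=1..n. X k ^ a k)"

lemma Psi_eq_sum_tuple_monomial: "Psi n X = (\<Sum>a\<in>tuples n. tuple_monomial X n a)"
  by (simp add: Psi_def tuple_monomial_def)

lemma tuple_length_le:
  assumes "a \<in> tuples n"
  shows "tuple_length n a \<le> n"
proof -
  have "tuple_length n a \<le> (\<Sum>k=1..n. k * a k)"
    unfolding tuple_length_def by (rule sum_mono) simp
  then show ?thesis
    using assms by (simp add: tuples_def)
qed

lemma tuple_length_pos:
  assumes "a \<in> tuples n" and "n \<noteq> 0"
  shows "tuple_length n a \<noteq> 0"
proof
  assume "tuple_length n a = 0"
  then have "(\<Sum>k=1..n. k * a k) = 0"
    by (simp add: tuple_length_def)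
  then show False
    using assms by (simp add: tuples_def)
qed

lemma tuple_length_increment:
  assumes b: "b \<in> tuples (n - k)" and k: "k \<in> {1..n}"
  shows "tuple_length n (b(k := Suc (b k))) = Suc (tuple_length (n - k) b)"
proof -
  have "tuple_length n (b(k := Suc (b k))) = Suc (b k) + (\<Sum>j\<in>{1..n} - {k}. b j)"
    unfolding tuple_length_def by (rule sum_fun_upd_remove) (use k in auto)
  moreover have "tuple_length (n - k) b = b k + (\<Sum>j\<in>{1..n} - {k}. b j)"
  proof -
    have "tuple_length (n - k) b = (\<Sum>j=1..n. b j)"
      unfolding tuple_length_def by (rule tuples_sum_extend[OF b, symmetric]) auto
    also have "\<dots> = b k + (\<Sum>j\<in>{1..n} - {k}. b j)"
      by (rule sum.remove) (use k in auto)
    finally show ?thesis .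
  qed
  ultimately show ?thesis
    by simp
qed

lemma tuple_monomial_extend:
  assumes "a \<in> tuples m" and "m \<le> N"
  shows "tuple_monomial X N a = tuple_monomial X m a"
proof -
  have "(\<Prod>k=1..N. fact (a k)) = (\<Prod>k=1..m. fact (a k) :: nat)"
    by (rule tuples_prod_extend[OF assms]) simp
  moreover have "(\<Prod>k=1..N. X k ^ a k) = (\<Prod>k=1..m. X k ^ a k)"
    by (rule tuples_prod_extend[OF assms]) simp
  ultimately show ?thesis
    unfolding tuple_monomial_def by simp
qed

lemma tuple_monomial_increment:
  assumes b: "b \<in> tuples (n - k)" and k: "k \<in> {1..n}"
  shows "of_nat (Suc (b k)) * tuple_monomial X n (b(k := Suc (b k))) = X k * tuple_monomial X (n - k) b"
proof -
  define F where "F = (\<Prod>j\<in>{1..n} - {k}. fact (b j) :: nat)"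
  define Q where "Q = (\<Prod>j\<in>{1..n} - {k}. X j ^ b j)"
  have "fact (Suc (b k)) * F = Suc (b k) * (fact (b k) * F)"
    by (simp add: algebra_simps)
  then have coeff: "(of_nat (Suc (b k)) :: rat) * (1 / of_nat (fact (Suc (b k)) * F)) = 1 / of_nat (fact (b k) * F)"
    by (simp only: of_nat_mult[of "Suc (b k)"]) (simp del: of_nat_Suc of_nat_mult)
  have facts_inc: "(\<Prod>j=1..n. fact ((b(k := Suc (b k))) j)) = fact (Suc (b k)) * F"
    unfolding F_def by (rule prod_fun_upd_remove) (use k in auto)
  have powers_inc: "(\<Prod>j=1..n. X j ^ (b(k := Suc (b k))) j) = X k ^ Suc (b k) * Q"
    unfolding Q_def by (rule prod_fun_upd_remove) (use k in auto)
  have facts: "(\<Prod>j=1..n. fact (b j)) = fact (b k) * F"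
    unfolding F_def by (rule prod.remove) (use k in auto)
  have powers: "(\<Prod>j=1..n. X j ^ b j) = X k ^ b k * Q"
    unfolding Q_def by (rule prod.remove) (use k in auto)
  have "of_nat (Suc (b k)) * tuple_monomial X n (b(k := Suc (b k)))
      = const (of_nat (Suc (b k)) * (1 / of_nat (fact (Suc (b k)) * F))) * (X k ^ Suc (b k) * Q)"
    unfolding tuple_monomial_def facts_inc powers_inc by (simp only: mult.assoc[symmetric] of_nat_mult_const)
  also have "\<dots> = X k * tuple_monomial X n b"
    unfolding tuple_monomial_def facts powers coeff by (simp only: power_Suc mult_ac)
  also have "\<dots> = X k * tuple_monomial X (n - k) b"
    using tuple_monomial_extend[OF b, of n] by simp
  finally show ?thesis .
qed

text \<open>Differentiation in X k: a k X^a / a! = X k X^b / b!, where b is a with one part k removed.\<close>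
lemma sum_tuples_part_multiplicity:
  assumes k: "k \<in> {1..n}"
  shows "(\<Sum>a\<in>tuples n. of_nat (a k) * (G (tuple_length n a) * tuple_monomial X n a))
       = X k * (\<Sum>b\<in>tuples (n - k). G (Suc (tuple_length (n - k) b)) * tuple_monomial X (n - k) b)"
proof -
  let ?inc = "\<lambda>b. b(k := Suc (b k))"
  have "(\<Sum>a\<in>tuples n. of_nat (a k) * (G (tuple_length n a) * tuple_monomial X n a))
      = (\<Sum>a\<in>{a \<in> tuples n. a k \<noteq> 0}. of_nat (a k) * (G (tuple_length n a) * tuple_monomial X n a))"
    by (rule sum.mono_neutral_right) (auto simp: finite_tuples)
  also have "\<dots> = (\<Sum>b\<in>tuples (n - k). X k * (G (Suc (tuple_length (n - k) b)) * tuple_monomial X (n - k) b))"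
  proof (rule sum.reindex_bij_betw[OF bij_betw_tuples_increment[OF k], symmetric, THEN trans], rule sum.cong)
    fix b assume b: "b \<in> tuples (n - k)"
    have "of_nat ((?inc b) k) * (G (tuple_length n (?inc b)) * tuple_monomial X n (?inc b))
        = G (Suc (tuple_length (n - k) b)) * (of_nat (Suc (b k)) * tuple_monomial X n (?inc b))"
      by (simp add: tuple_length_increment[OF b k] ac_simps)
    also have "\<dots> = X k * (G (Suc (tuple_length (n - k) b)) * tuple_monomial X (n - k) b)"
      unfolding tuple_monomial_increment[OF b k] by (rule mult.left_commute)
    finally show "of_nat ((?inc b) k) * (G (tuple_length n (?inc b)) * tuple_monomial X n (?inc b))
        = X k * (G (Suc (tuple_length (n - k) b)) * tuple_monomial X (n - k) b)" .
  qed simp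
  finally show ?thesis
    by (simp add: sum_distrib_left)
qed

lemma Psi_0: "Psi 0 X = 1"
  by (simp add: Psi_def tuples_0)

lemma Psi_recurrence: "of_nat n * Psi n X = (\<Sum>k=1..n. of_nat k * X k * Psi (n - k) X)"
proof -
  have "of_nat n * Psi n X = (\<Sum>a\<in>tuples n. \<Sum>k=1..n. of_nat k * (of_nat (a k) * tuple_monomial X n a))"
    unfolding Psi_eq_sum_tuple_monomial sum_distrib_left
  proof (rule sum.cong)
    fix a assume "a \<in> tuples n"
    then have "(of_nat n :: HR) = of_nat (\<Sum>k=1..n. k * a k)"
      by (simp add: tuples_def)
    also have "\<dots> = (\<Sum>k=1..n. of_nat k * of_nat (a k))"
      by simp
    finally have "(of_nat n :: HR) = (\<Sum>k=1..n. of_nat k * of_nat (a k))" .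
    then show "of_nat n * tuple_monomial X n a = (\<Sum>k=1..n. of_nat k * (of_nat (a k) * tuple_monomial X n a))"
      by (simp add: sum_distrib_right mult.assoc)
  qed simp
  also have "\<dots> = (\<Sum>k=1..n. of_nat k * (\<Sum>a\<in>tuples n. of_nat (a k) * tuple_monomial X n a))"
    by (subst sum.swap) (simp add: sum_distrib_left)
  also have "\<dots> = (\<Sum>k=1..n. of_nat k * X k * Psi (n - k) X)"
    using sum_tuples_part_multiplicity[where G = "\<lambda>_. 1" and X = X]
    by (intro sum.cong) (simp_all add: Psi_eq_sum_tuple_monomial mult.assoc)
  finally show ?thesis .
qed

lemma Psi_cong: "(\<And>k. k \<in> {1..n} \<Longrightarrow> X k = Y k) \<Longrightarrow> Psi n X = Psi n Y"
  unfolding Psi_def by (intro sum.cong prod.cong) auto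

lemma Psi_split_last:
  assumes "n \<noteq> 0"
  shows "Psi n X = X n + Psi n (X(n := 0))"
proof -
  obtain m where n: "n = Suc m" using assms by (cases n) auto
  have split: "of_nat n * Psi n Y = (\<Sum>k=1..m. of_nat k * Y k * Psi (n - k) Y) + of_nat n * Y n" for Y
    using Psi_recurrence[of n Y] by (simp add: n Psi_0)
  have "(\<Sum>k=1..m. of_nat k * X k * Psi (n - k) X) = (\<Sum>k=1..m. of_nat k * (X(n := 0)) k * Psi (n - k) (X(n := 0)))"
  proof (rule sum.cong)
    fix k assume "k \<in> {1..m}"
    moreover from this have "Psi (n - k) X = Psi (n - k) (X(n := 0))"
      by (intro Psi_cong) (auto simp: n)
    ultimately show "of_nat k * X k * Psi (n - k) X = of_nat k * (X(n := 0)) k * Psi (n - k) (X(n := 0))"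
      by (simp add: n)
  qed simp
  then have "of_nat n * Psi n X = of_nat n * (X n + Psi n (X(n := 0)))"
    using split[of X] split[of "X(n := 0)"] by (simp add: algebra_simps)
  then show ?thesis
    using assms by (rule HR_of_nat_mult_left_cancel)
qed

definition Psi_part :: "(nat \<Rightarrow> HR) \<Rightarrow> nat \<Rightarrow> nat \<Rightarrow> HR" where
  "Psi_part X n m = (\<Sum>a\<in>tuples n. of_bool (tuple_length n a = m) * tuple_monomial X n a)"

lemma Psi_part_0: "Psi_part X n 0 = (if n = 0 then 1 else 0)"
proof (cases "n = 0")
  case True
  then show ?thesis
    by (simp add: Psi_part_def tuples_0 tuple_length_def tuple_monomial_def)
next
  case False
  then have "Psi_part X n 0 = 0"
    unfolding Psi_part_def by (intro sum.neutral ballI) (simp add: tuple_length_pos)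
  then show ?thesis
    using False by simp
qed

lemma Psi_part_eq_0: "n < m \<Longrightarrow> Psi_part X n m = 0"
  unfolding Psi_part_def by (rule sum.neutral) (auto dest: tuple_length_le)

lemma Psi_part_recurrence:
  "of_nat (Suc m) * Psi_part X n (Suc m) = (\<Sum>k=1..n. X k * Psi_part X (n - k) m)"
proof -
  let ?G = "\<lambda>j. of_bool (j = Suc m) :: HR"
  have "of_nat (Suc m) * Psi_part X n (Suc m)
      = (\<Sum>a\<in>tuples n. \<Sum>k=1..n. of_nat (a k) * (?G (tuple_length n a) * tuple_monomial X n a))"
    unfolding Psi_part_def sum_distrib_left
  proof (rule sum.cong)
    fix a
    have "of_nat (Suc m) * (?G (tuple_length n a) * tuple_monomial X n a)
        = of_nat (tuple_length n a) * (?G (tuple_length n a) * tuple_monomial X n a)"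
      by (cases "tuple_length n a = Suc m") simp_all
    then show "of_nat (Suc m) * (?G (tuple_length n a) * tuple_monomial X n a)
        = (\<Sum>k=1..n. of_nat (a k) * (?G (tuple_length n a) * tuple_monomial X n a))"
      by (simp add: tuple_length_def sum_distrib_right)
  qed simp
  also have "\<dots> = (\<Sum>k=1..n. X k * Psi_part X (n - k) m)"
  proof (subst sum.swap, rule sum.cong)
    fix k assume "k \<in> {1..n}"
    from sum_tuples_part_multiplicity[OF this, of ?G X]
    show "(\<Sum>a\<in>tuples n. of_nat (a k) * (?G (tuple_length n a) * tuple_monomial X n a))
        = X k * Psi_part X (n - k) m"
      by (simp add: Psi_part_def)
  qed simp
  finally show ?thesis .
qed

section \<open>Powers of a generating series and the truncated logarithm\<close>

definition gen_series :: "(nat \<Rightarrow> HR) \<Rightarrow> HR fps" where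
  "gen_series X = Abs_fps (\<lambda>n. if n = 0 then 0 else X n)"

lemma gen_series_nth [simp]: "fps_nth (gen_series X) n = (if n = 0 then 0 else X n)"
  by (simp add: gen_series_def)

lemma gen_series_power_nth: "fps_nth (gen_series X ^ m) n = of_nat (fact m) * Psi_part X n m"
proof (induction m arbitrary: n)
  case 0
  then show ?case
    by (simp add: Psi_part_0)
next
  case (Suc m)
  have "fps_nth (gen_series X ^ Suc m) n = (\<Sum>i=0..n. fps_nth (gen_series X) i * fps_nth (gen_series X ^ m) (n - i))"
    by (simp add: fps_mult_nth)
  also have "\<dots> = (\<Sum>i=1..n. X i * (of_nat (fact m) * Psi_part X (n - i) m))"
    by (subst sum.atLeast_Suc_atMost) (simp_all add: Suc.IH)
  also have "\<dots> = of_nat (fact m) * (of_nat (Suc m) * Psi_part X n (Suc m))"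
    by (simp only: Psi_part_recurrence) (simp add: sum_distrib_left mult_ac)
  also have "\<dots> = of_nat (fact (Suc m)) * Psi_part X n (Suc m)"
    by (simp add: algebra_simps)
  finally show ?case .
qed

lemma minus_gen_series: "- gen_series X = gen_series (\<lambda>k. - X k)"
  by (rule fps_ext) simp

lemma minus_gen_series_power_nth_below: "j < m \<Longrightarrow> fps_nth ((- gen_series X) ^ m) j = 0"
  by (simp add: minus_gen_series gen_series_power_nth Psi_part_eq_0)

definition truncated_log1p :: "HR fps \<Rightarrow> nat \<Rightarrow> HR fps" where
  "truncated_log1p F N = (\<Sum>m=1..N. fps_const (const ((-1) ^ (m + 1) / of_nat m)) * F ^ m)"

lemma fps_deriv_log1p_term:
  assumes "m \<noteq> 0"
  shows "fps_deriv (fps_const (const ((-1) ^ (m + 1) / of_nat m)) * F ^ m) = fps_deriv F * (- F) ^ (m - 1)"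
proof -
  obtain j where m: "m = Suc j"
    using assms not0_implies_Suc by blast
  have "(-1::rat) ^ (m + 1) / of_nat m * of_nat m = (-1) ^ j"
    using m by simp
  then have "const ((-1) ^ (m + 1) / of_nat m) * of_nat m = const ((-1) ^ j)"
    by (metis const_mult const_of_nat)
  then have "const ((-1) ^ (m + 1) / of_nat m) * of_nat m = (-1::HR) ^ j"
    by (simp only: const_power const_minus const_one)
  then have "fps_const (const ((-1) ^ (m + 1) / of_nat m)) * fps_const (of_nat m) = fps_const (-1) ^ j"
    by (simp only: fps_const_mult fps_const_power)
  then have coeff: "fps_const (const ((-1) ^ (m + 1) / of_nat m)) * fps_const (of_nat m) = (-1) ^ j"
    by (simp flip: fps_const_neg)
  have "fps_deriv (fps_const (const ((-1) ^ (m + 1) / of_nat m)) * F ^ m)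
      = fps_const (const ((-1) ^ (m + 1) / of_nat m)) * fps_const (of_nat m) * (fps_deriv F * F ^ j)"
    by (simp only: fps_deriv_mult_const_left fps_deriv_power m diff_Suc_1) (simp only: mult_ac)
  also have "\<dots> = (-1) ^ j * (fps_deriv F * F ^ j)"
    by (simp only: coeff)
  also have "\<dots> = fps_deriv F * (- F) ^ (m - 1)"
    by (simp only: m diff_Suc_1 power_minus[of F j] mult_ac)
  finally show ?thesis .
qed

lemma fps_deriv_truncated_log1p:
  "fps_deriv (truncated_log1p F N) * (1 + F) = fps_deriv F * (1 - (- F) ^ N)"
proof -
  have "fps_deriv (truncated_log1p F N) = (\<Sum>m=1..N. fps_deriv F * (- F) ^ (m - 1))"
    unfolding truncated_log1p_def fps_deriv_sum
    by (rule sum.cong[OF refl], rule fps_deriv_log1p_term) simp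
  also have "\<dots> = fps_deriv F * (\<Sum>i<N. (- F) ^ i)"
    by (simp add: sum.atLeast1_atMost_eq sum_distrib_left)
  finally show ?thesis
    using one_diff_power_eq[of "- F" N] by (simp add: mult.assoc mult.commute[of "1 + F"])
qed

lemma truncated_log1p_recurrence:
  assumes n: "n \<noteq> 0" "n \<le> N"
  shows "of_nat n * X n
       = (\<Sum>k=1..n. of_nat k * fps_nth (truncated_log1p (gen_series X) N) k * fps_nth (1 + gen_series X) (n - k))"
proof -
  let ?L = "gen_series X" and ?Q = "truncated_log1p (gen_series X) N"
  have "fps_nth (fps_deriv ?Q * (1 + ?L)) (n - 1) = (\<Sum>i=0..n - 1. of_nat (Suc i) * fps_nth ?Q (Suc i) * fps_nth (1 + ?L) (n - Suc i))"
    by (simp add: fps_mult_nth)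
  also have "\<dots> = (\<Sum>k=Suc 0..Suc (n - 1). of_nat k * fps_nth ?Q k * fps_nth (1 + ?L) (n - k))"
    by (rule sum.shift_bounds_cl_Suc_ivl[where g = "\<lambda>k. of_nat k * fps_nth ?Q k * fps_nth (1 + ?L) (n - k)", symmetric])
  also have "\<dots> = (\<Sum>k=1..n. of_nat k * fps_nth ?Q k * fps_nth (1 + ?L) (n - k))"
    using n by simp
  finally have lhs: "fps_nth (fps_deriv ?Q * (1 + ?L)) (n - 1) = (\<Sum>k=1..n. of_nat k * fps_nth ?Q k * fps_nth (1 + ?L) (n - k))" .
  have "fps_nth (fps_deriv ?L * (- ?L) ^ N) (n - 1) = 0"
    unfolding fps_mult_nth using n by (intro sum.neutral ballI) (simp add: minus_gen_series_power_nth_below)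
  then have "fps_nth (fps_deriv ?L * (1 - (- ?L) ^ N)) (n - 1) = of_nat n * X n"
    using n by (simp add: right_diff_distrib)
  then show ?thesis
    using fps_deriv_truncated_log1p[of ?L N] lhs by simp
qed

definition log_coeff :: "(nat \<Rightarrow> HR) \<Rightarrow> nat \<Rightarrow> HR" where
  "log_coeff X i = (\<Sum>a\<in>tuples i.
     const ((-1) ^ ((\<Sum>k=1..i. a k) + 1) * of_nat (fact ((\<Sum>k=1..i. a k) - 1))
            / of_nat (\<Prod>k=1..i. fact (a k)))
     * (\<Prod>k=1..i. X k ^ a k))"

lemma log1p_coeff_times_fact:
  assumes "w \<noteq> 0"
  shows "const ((-1) ^ (w + 1) / of_nat w) * of_nat (fact w) * (const (1 / of_nat d) * Y)
       = const ((-1) ^ (w + 1) * of_nat (fact (w - 1)) / of_nat d) * Y"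
proof -
  have "fact w = w * fact (w - 1)"
    using assms by (cases w) simp_all
  then have "(-1::rat) ^ (w + 1) / of_nat w * of_nat (fact w) * (1 / of_nat d)
      = (-1) ^ (w + 1) * of_nat (fact (w - 1)) / of_nat d"
    using assms by simp
  then show ?thesis
    by (metis const_mult const_of_nat mult.assoc)
qed

lemma truncated_log1p_nth:
  assumes k: "k \<noteq> 0" "k \<le> N"
  shows "fps_nth (truncated_log1p (gen_series X) N) k = log_coeff X k"
proof -
  let ?c = "\<lambda>m. const ((-1) ^ (m + 1) / of_nat m)"
  have "fps_nth (truncated_log1p (gen_series X) N) k
      = (\<Sum>m=1..N. \<Sum>a\<in>tuples k. of_bool (tuple_length k a = m) * (?c m * of_nat (fact m) * tuple_monomial X k a))"
    by (simp add: truncated_log1p_def fps_sum_nth gen_series_power_nth Psi_part_def sum_distrib_left mult_ac)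
  also have "\<dots> = (\<Sum>a\<in>tuples k. ?c (tuple_length k a) * of_nat (fact (tuple_length k a)) * tuple_monomial X k a)"
  proof (subst sum.swap, rule sum.cong[OF refl])
    fix a assume a: "a \<in> tuples k"
    have "tuple_length k a \<noteq> 0" and "tuple_length k a \<le> k"
      using tuple_length_pos[OF a k(1)] tuple_length_le[OF a] .
    then have "{1..N} \<inter> {m. tuple_length k a = m} = {tuple_length k a}"
      using k by auto
    then show "(\<Sum>m=1..N. of_bool (tuple_length k a = m) * (?c m * of_nat (fact m) * tuple_monomial X k a))
        = ?c (tuple_length k a) * of_nat (fact (tuple_length k a)) * tuple_monomial X k a"
      by simp
  qed
  also have "\<dots> = log_coeff X k"
    unfolding log_coeff_def
  proof (rule sum.cong[OF refl])
    fix a assume "a \<in> tuples k"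
    from tuple_length_pos[OF this k(1)]
    show "?c (tuple_length k a) * of_nat (fact (tuple_length k a)) * tuple_monomial X k a
        = const ((-1) ^ ((\<Sum>j=1..k. a j) + 1) * of_nat (fact ((\<Sum>j=1..k. a j) - 1))
            / of_nat (\<Prod>j=1..k. fact (a j))) * (\<Prod>j=1..k. X j ^ a j)"
      unfolding tuple_monomial_def tuple_length_def by (rule log1p_coeff_times_fact)
  qed
  finally show ?thesis .
qed

lemma log_coeff_recurrence:
  "n \<noteq> 0 \<Longrightarrow> of_nat n * X n = (\<Sum>k=1..n. of_nat k * log_coeff X k * fps_nth (1 + gen_series X) (n - k))"
  using truncated_log1p_recurrence[of n n X] by (simp add: truncated_log1p_nth)

section \<open>The elements P n\<close>

lemma HR_convolution_recurrence_unique: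
  fixes Y Y' W Z :: "nat \<Rightarrow> HR"
  assumes Y: "\<And>n. n \<noteq> 0 \<Longrightarrow> of_nat n * Z n = (\<Sum>k=1..n. of_nat k * Y k * W (n - k))"
    and Y': "\<And>n. n \<noteq> 0 \<Longrightarrow> of_nat n * Z n = (\<Sum>k=1..n. of_nat k * Y' k * W (n - k))"
    and "W 0 = 1"
  shows "n \<noteq> 0 \<Longrightarrow> Y n = Y' n"
proof (induction n rule: less_induct)
  case (less n)
  then obtain m where n: "n = Suc m"
    using not0_implies_Suc by blast
  have "(\<Sum>k=1..m. of_nat k * Y k * W (n - k)) = (\<Sum>k=1..m. of_nat k * Y' k * W (n - k))"
    using less.IH n by (intro sum.cong refl) auto
  then have "of_nat n * Y n = of_nat n * Y' n"
    using Y[OF less.prems] Y'[OF less.prems] \<open>W 0 = 1\<close> by (simp add: n)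
  then show ?case
    using less.prems by (rule HR_of_nat_mult_left_cancel)
qed

lemma Pfun_eq: "Pfun m k = (if k \<in> {1..m} then P k else 0)"
  by (induction m) (auto simp: P_def)

lemma P_eq_ladder_minus_Psi:
  assumes "n \<noteq> 0"
  shows "P n = ladder n - Psi n (Pfun (n - 1))"
proof (cases "n = 1")
  case True
  have "Psi 1 (\<lambda>_. 0) = 0"
    using Psi_recurrence[of 1 "\<lambda>_. 0"] by simp
  then show ?thesis
    using True by (simp add: P_def)
next
  case False
  then obtain m where "n = Suc m" and "m \<noteq> 0"
    using assms not0_implies_Suc by force
  then show ?thesis
    by (simp add: P_def)
qed

lemma Psi_P_eq_ladder_series_nth: "Psi n P = fps_nth (1 + gen_series ladder) n"
proof (cases "n = 0")
  case False
  have "Psi n (P(n := 0)) = Psi n (Pfun (n - 1))"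
    by (rule Psi_cong) (auto simp: Pfun_eq)
  then show ?thesis
    using Psi_split_last[OF False, of P] P_eq_ladder_minus_Psi[OF False] False by simp
qed (simp add: Psi_0)

lemma ladder_recurrence:
  "n \<noteq> 0 \<Longrightarrow> of_nat n * ladder n = (\<Sum>k=1..n. of_nat k * P k * fps_nth (1 + gen_series ladder) (n - k))"
  using Psi_recurrence[of n P] by (simp only: Psi_P_eq_ladder_series_nth) simp

theorem proposition9p3:
  fixes i :: nat
  assumes "i \<ge> 1"
  shows "P i = (\<Sum>a\<in>tuples i.
     const ((-1) ^ ((\<Sum>k=1..i. a k) + 1) * of_nat (fact ((\<Sum>k=1..i. a k) - 1))
            / of_nat (\<Prod>k=1..i. fact (a k)))
     * (\<Prod>k=1..i. ladder k ^ a k))"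
proof -
  have "P i = log_coeff ladder i"
    by (rule HR_convolution_recurrence_unique[OF ladder_recurrence log_coeff_recurrence])
      (use assms in simp_all)
  then show ?thesis
    unfolding log_coeff_def .
qed

end
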